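(* Let $X$ be a $T_1$ space, $\mathcal C$ a pre-pseudogroup on $X$, and $f\in\mathcal C(U,V)$. Then the underlying map $\bar f:U\to V$ is continuous; moreover it is a local homeomorphism.
   Context: $X_{top}$ denotes the set of open subsets of $X$, regarded as a category with exactly one morphism $U\to V$ iff $U\subseteq V$. Let $\mathcal C$ be a small category with $\mathrm{Ob}(\mathcal C)=X_{top}$ containing $X_{top}$ as a subcategory (identity on objects). For each open $V$, $\mathcal C(-,V)$ is a presheaf of sets on $X$ (restriction along $U'\subseteq U$ = precomposition with the inclusion morphism). For $x\in X$ let $\mathcal C_x(V)=\operatorname{colim}_{U\ni x}\mathcal C(U,V)$ (germ of $f\in\mathcal C(U,V)$ at $x$ written $f_x$); postcomposition with inclusions makes this functorial in $V$, and for $y\in X$ let $\mathcal C_x^y=\lim_{V\ni y}\mathcal C_x(V)$ (limit over open neighbourhoods of $y$), with projections $\mathcal C_x^y\to\mathcal C_x(V)$. Composition in $\mathcal C$ induces $\mathcal C_y^z\times\mathcal C_x^y\to\mathcal C_x^z$: given $\varphi\in\mathcal C_x^y,\psi\in\mathcal C_y^z$ and open $W\ni z$, choose $g\in\mathcal C(V,W)$, $y\in V$, representing the component $\psi_W$, and $f\in\mathcal C(U,V)$ representing $\varphi_V$; the $W$-component of $\psi\circ\varphi$ is $(g\circ f)_x$. This defines a category $\mathcal C^\star$ with objects the points of $X$ and $\mathcal C^\star(x,y)=\mathcal C_x^y$. For $X$ a $T_1$ space, a pre-pseudogroup on $X$ is such a $\mathcal C$ satisfying: (1) $\mathrm{Ob}(\mathcal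 C)=\mathrm{Ob}(X_{top})$; (2) for every open $V$ and $x\in X$, the map $\coprod_{y\in V}\mathcal C_x^y\to\mathcal C_x(V)$ induced by the projections is a bijection; (3) $\mathcal C^\star$ is a groupoid. Underlying map: for $f\in\mathcal C(U,V)$ and $x\in U$, by (2) there is a unique $y\in V$ such that the germ $f_x\in\mathcal C_x(V)$ lies in the image of $\mathcal C_x^y$; set $\bar f(x)=y$. This gives a map $\bar f:U\to V$. *)

theory Defs
  imports "HOL-Analysis.Analysis"
begin

text \<open>A small category whose objects are the open subsets of the space (the type 'a,
  carrying a topology via the type class), given by hom-sets Hom U V, a composition
  cmp g f (meaning g after f), identities ident U, and the morphisms incl U V
  (for U a subset of V) forming the subcategory X_top (identity on objects).\<close>

definition cat_on_opens ::
  "('a::topological_space set \<Rightarrow> 'a set \<Rightarrow> 'm set) \<Rightarrow> ('m \<Rightarrow> 'm \<Rightarrow> 'm)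
   \<Rightarrow> ('a set \<Rightarrow> 'm) \<Rightarrow> ('a set \<Rightarrow> 'a set \<Rightarrow> 'm) \<Rightarrow> bool" where
  "cat_on_opens Hom cmp ident incl \<longleftrightarrow>
     (\<forall>U V W f g. open U \<and> open V \<and> open W \<and> f \<in> Hom U V \<and> g \<in> Hom V W
        \<longrightarrow> cmp g f \<in> Hom U W)
   \<and> (\<forall>U V W Z f g h. open U \<and> open V \<and> open W \<and> open Z \<and> f \<in> Hom U V \<and> g \<in> Hom V W
        \<and> h \<in> Hom W Z \<longrightarrow> cmp h (cmp g f) = cmp (cmp h g) f)
   \<and> (\<forall>U. open U \<longrightarrow> ident U \<in> Hom U U)
   \<and> (\<forall>U V f. open U \<and> open V \<and> f \<in> Hom U V \<longrightarrow> cmp f (ident U) = f \<and> cmp (ident V) f = f)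
   \<and> (\<forall>U V. open U \<and> open V \<and> U \<subseteq> V \<longrightarrow> incl U V \<in> Hom U V)
   \<and> (\<forall>U. open U \<longrightarrow> incl U U = ident U)
   \<and> (\<forall>U V W. open U \<and> open V \<and> open W \<and> U \<subseteq> V \<and> V \<subseteq> W
        \<longrightarrow> cmp (incl V W) (incl U V) = incl U W)"

text \<open>The germ at x of f \<in> C(U,V): its equivalence class in colim_{U \<ni> x} C(U,V),
  represented as the set of all equivalent pairs (U',f').\<close>

definition germ ::
  "('a::topological_space set \<Rightarrow> 'a set \<Rightarrow> 'm set) \<Rightarrow> ('m \<Rightarrow> 'm \<Rightarrow> 'm)
   \<Rightarrow> ('a set \<Rightarrow> 'a set \<Rightarrow> 'm) \<Rightarrow> 'a \<Rightarrow> 'a set \<Rightarrow> 'a set \<Rightarrow> 'm \<Rightarrow> ('a set \<times> 'm) set" where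
  "germ Hom cmp incl x V U f =
     {(U', f'). open U' \<and> x \<in> U' \<and> f' \<in> Hom U' V \<and>
        (\<exists>W. open W \<and> x \<in> W \<and> W \<subseteq> U \<and> W \<subseteq> U' \<and>
             cmp f (incl W U) = cmp f' (incl W U'))}"

definition germs ::
  "('a::topological_space set \<Rightarrow> 'a set \<Rightarrow> 'm set) \<Rightarrow> ('m \<Rightarrow> 'm \<Rightarrow> 'm)
   \<Rightarrow> ('a set \<Rightarrow> 'a set \<Rightarrow> 'm) \<Rightarrow> 'a \<Rightarrow> 'a set \<Rightarrow> ('a set \<times> 'm) set set" where
  "germs Hom cmp incl x V =
     {germ Hom cmp incl x V U f | U f. open U \<and> x \<in> U \<and> f \<in> Hom U V}"

text \<open>C_x^y = lim_{V \<ni> y} C_x(V): compatible families indexed by the open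
  neighbourhoods V of y (extended by {} elsewhere); the transition maps
  C_x(V') \<rightarrow> C_x(V) for V' \<subseteq> V are postcomposition with incl V' V.\<close>

definition Cstar ::
  "('a::topological_space set \<Rightarrow> 'a set \<Rightarrow> 'm set) \<Rightarrow> ('m \<Rightarrow> 'm \<Rightarrow> 'm)
   \<Rightarrow> ('a set \<Rightarrow> 'a set \<Rightarrow> 'm) \<Rightarrow> 'a \<Rightarrow> 'a \<Rightarrow> ('a set \<Rightarrow> ('a set \<times> 'm) set) set" where
  "Cstar Hom cmp incl x y =
     {\<phi>. (\<forall>V. open V \<and> y \<in> V \<longrightarrow> \<phi> V \<in> germs Hom cmp incl x V)
        \<and> (\<forall>V. \<not> (open V \<and> y \<in> V) \<longrightarrow> \<phi> V = {})
        \<and> (\<forall>V V' U f. open V \<and> open V' \<and> y \<in> V' \<and> V' \<subseteq> V \<and> open U \<and> x \<in> U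
              \<and> f \<in> Hom U V' \<and> \<phi> V' = germ Hom cmp incl x V' U f
              \<longrightarrow> \<phi> V = germ Hom cmp incl x V U (cmp (incl V' V) f))}"

definition Cstar_comp ::
  "('a::topological_space set \<Rightarrow> 'a set \<Rightarrow> 'm set) \<Rightarrow> ('m \<Rightarrow> 'm \<Rightarrow> 'm)
   \<Rightarrow> ('a set \<Rightarrow> 'a set \<Rightarrow> 'm) \<Rightarrow> 'a \<Rightarrow> 'a \<Rightarrow> 'a
   \<Rightarrow> ('a set \<Rightarrow> ('a set \<times> 'm) set) \<Rightarrow> ('a set \<Rightarrow> ('a set \<times> 'm) set)
   \<Rightarrow> ('a set \<Rightarrow> ('a set \<times> 'm) set)" where
  "Cstar_comp Hom cmp incl x y z \<psi> \<phi> = (\<lambda>W.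
     if open W \<and> z \<in> W then
       (SOME \<gamma>. \<exists>V g U f. open V \<and> y \<in> V \<and> g \<in> Hom V W \<and> \<psi> W = germ Hom cmp incl y W V g
          \<and> open U \<and> x \<in> U \<and> f \<in> Hom U V \<and> \<phi> V = germ Hom cmp incl x V U f
          \<and> \<gamma> = germ Hom cmp incl x W U (cmp g f))
     else {})"

definition Cstar_id ::
  "('a::topological_space set \<Rightarrow> 'a set \<Rightarrow> 'm set) \<Rightarrow> ('m \<Rightarrow> 'm \<Rightarrow> 'm)
   \<Rightarrow> ('a set \<Rightarrow> 'm) \<Rightarrow> ('a set \<Rightarrow> 'a set \<Rightarrow> 'm) \<Rightarrow> 'a \<Rightarrow> ('a set \<Rightarrow> ('a set \<times> 'm) set)" where
  "Cstar_id Hom cmp ident incl x = (\<lambda>W.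
     if open W \<and> x \<in> W then germ Hom cmp incl x W W (ident W) else {})"

text \<open>Pre-pseudogroup on a T1 space (the type 'a). Condition (1) is built into the
  representation (objects = open sets).\<close>

definition pre_pseudogroup ::
  "('a::t1_space set \<Rightarrow> 'a set \<Rightarrow> 'm set) \<Rightarrow> ('m \<Rightarrow> 'm \<Rightarrow> 'm)
   \<Rightarrow> ('a set \<Rightarrow> 'm) \<Rightarrow> ('a set \<Rightarrow> 'a set \<Rightarrow> 'm) \<Rightarrow> bool" where
  "pre_pseudogroup Hom cmp ident incl \<longleftrightarrow>
     cat_on_opens Hom cmp ident incl
   \<and> (\<forall>V x. open V \<longrightarrow>
        bij_betw (\<lambda>(y, \<phi>). \<phi> V) (SIGMA y:V. Cstar Hom cmp incl x y) (germs Hom cmp incl x V))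
   \<and> (\<forall>x y \<phi>. \<phi> \<in> Cstar Hom cmp incl x y \<longrightarrow>
        (\<exists>\<psi> \<in> Cstar Hom cmp incl y x.
            Cstar_comp Hom cmp incl x y x \<psi> \<phi> = Cstar_id Hom cmp ident incl x
          \<and> Cstar_comp Hom cmp incl y x y \<phi> \<psi> = Cstar_id Hom cmp ident incl y))"

definition underlying ::
  "('a::topological_space set \<Rightarrow> 'a set \<Rightarrow> 'm set) \<Rightarrow> ('m \<Rightarrow> 'm \<Rightarrow> 'm)
   \<Rightarrow> ('a set \<Rightarrow> 'a set \<Rightarrow> 'm) \<Rightarrow> 'a set \<Rightarrow> 'a set \<Rightarrow> 'm \<Rightarrow> 'a \<Rightarrow> 'a" where
  "underlying Hom cmp incl U V f x =
     (THE y. y \<in> V \<and> (\<exists>\<phi> \<in> Cstar Hom cmp incl x y. \<phi> V = germ Hom cmp incl x V U f))"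

definition local_homeomorphism_on :: "'a::topological_space set \<Rightarrow> ('a \<Rightarrow> 'b::topological_space) \<Rightarrow> bool" where
  "local_homeomorphism_on U g \<longleftrightarrow>
     (\<forall>x\<in>U. \<exists>W. open W \<and> x \<in> W \<and> W \<subseteq> U \<and> open (g ` W) \<and>
        (\<exists>h. homeomorphism W (g ` W) g h))"

end

theory Submission
  imports Defs
begin

text \<open>Write F for the underlying map of f. Underlying maps are functorial and depend only on
  germs, so they are determined locally. Continuity at x: for an open S containing F x, the
  (S \<inter> V)-component of the element of C_x^(F x) containing the germ of f is represented by a
  morphism into S \<inter> V, whose underlying map agrees with F near x. Local homeomorphism: as
  C^\<star> is a groupoid, that element has an inverse, represented near F x by some g \<in> C(B,U);
  the composite is the identity germ, so G \<circ> F = id near x and F \<circ> G = id near F x, where G is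
  the underlying map of g.\<close>

lemma local_homeomorphism_from_local_inverse:
  fixes f :: "'a::topological_space \<Rightarrow> 'b::topological_space"
  assumes "open U" "open U'" "x \<in> U" "continuous_on U f" "continuous_on U' g"
    and "eventually (\<lambda>x'. f x' \<in> U' \<and> g (f x') = x') (nhds x)"
    and "eventually (\<lambda>y'. g y' \<in> U \<and> f (g y') = y') (nhds (f x))"
  shows "\<exists>W. open W \<and> x \<in> W \<and> W \<subseteq> U \<and> open (f ` W) \<and> homeomorphism W (f ` W) f g"
proof -
  obtain N where N: "open N" "x \<in> N" "\<forall>x'\<in>N. f x' \<in> U' \<and> g (f x') = x'"
    using assms(6) unfolding eventually_nhds by blast
  obtain M where M: "open M" "f x \<in> M" "\<forall>y'\<in>M. g y' \<in> U \<and> f (g y') = y'"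
    using assms(7) unfolding eventually_nhds by blast
  define W where "W = N \<inter> (f -` M \<inter> U)"
  have "open W"
    unfolding W_def using assms(1,4) N(1) M(1) by (simp add: continuous_on_open_vimage open_Int)
  have fW: "f ` W = M \<inter> (g -` W \<inter> U')"
  proof
    show "f ` W \<subseteq> M \<inter> (g -` W \<inter> U')" using N(3) unfolding W_def by auto
    show "M \<inter> (g -` W \<inter> U') \<subseteq> f ` W" using M(3) by (auto intro: rev_image_eqI)
  qed
  have "open (f ` W)"
    unfolding fW using assms(2,5) M(1) \<open>open W\<close> by (simp add: continuous_on_open_vimage open_Int)
  moreover have "homeomorphism W (f ` W) f g"
  proof
    show "continuous_on W f" using assms(4) by (rule continuous_on_subset) (auto simp: W_def)
    show "continuous_on (f ` W) g" using assms(5) by (rule continuous_on_subset) (auto simp: fW)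
  qed (use N(3) M(3) in \<open>auto simp: W_def fW\<close>)
  ultimately show ?thesis using \<open>open W\<close> N(2) M(2) assms(3) unfolding W_def by blast
qed

locale opens_category =
  fixes Hom :: "'a::topological_space set \<Rightarrow> 'a set \<Rightarrow> 'm set"
    and cmp :: "'m \<Rightarrow> 'm \<Rightarrow> 'm"
    and ident :: "'a set \<Rightarrow> 'm"
    and incl :: "'a set \<Rightarrow> 'a set \<Rightarrow> 'm"
  assumes cat_on_opens: "cat_on_opens Hom cmp ident incl"
begin

abbreviation "gm \<equiv> germ Hom cmp incl"

lemmas cat_laws = cat_on_opens[unfolded cat_on_opens_def]

lemma comp_hom:
  "open U \<Longrightarrow> open V \<Longrightarrow> open W \<Longrightarrow> f \<in> Hom U V \<Longrightarrow> g \<in> Hom V W \<Longrightarrow> cmp g f \<in> Hom U W"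
  using cat_laws by (elim conjE) simp

lemma comp_assoc:
  "open U \<Longrightarrow> open V \<Longrightarrow> open W \<Longrightarrow> open Z \<Longrightarrow> f \<in> Hom U V \<Longrightarrow> g \<in> Hom V W \<Longrightarrow> h \<in> Hom W Z
    \<Longrightarrow> cmp h (cmp g f) = cmp (cmp h g) f"
  using cat_laws by (elim conjE) simp

lemma ident_hom: "open U \<Longrightarrow> ident U \<in> Hom U U"
  using cat_laws by (elim conjE) simp

lemma comp_ident_right: "open U \<Longrightarrow> open V \<Longrightarrow> f \<in> Hom U V \<Longrightarrow> cmp f (ident U) = f"
  using cat_laws by (elim conjE) simp

lemma comp_ident_left: "open U \<Longrightarrow> open V \<Longrightarrow> f \<in> Hom U V \<Longrightarrow> cmp (ident V) f = f"
  using cat_laws by (elim conjE) simp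

lemma incl_hom: "open U \<Longrightarrow> open V \<Longrightarrow> U \<subseteq> V \<Longrightarrow> incl U V \<in> Hom U V"
  using cat_laws by (elim conjE) simp

lemma incl_refl: "open U \<Longrightarrow> incl U U = ident U"
  using cat_laws by (elim conjE) simp

lemma incl_trans:
  "open U \<Longrightarrow> open V \<Longrightarrow> open W \<Longrightarrow> U \<subseteq> V \<Longrightarrow> V \<subseteq> W \<Longrightarrow> cmp (incl V W) (incl U V) = incl U W"
  using cat_laws by (elim conjE) simp

lemma comp_incl_restrict:
  assumes "open W'" "open W" "open A" "open V" "W' \<subseteq> W" "W \<subseteq> A" "a \<in> Hom A V"
  shows "cmp a (incl W' A) = cmp (cmp a (incl W A)) (incl W' W)"
  using assms incl_trans[of W' W A] comp_assoc[of W' W A V "incl W' W" "incl W A" a] incl_hom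
  by simp

definition agree_near :: "'a \<Rightarrow> 'a set \<Rightarrow> 'm \<Rightarrow> 'a set \<Rightarrow> 'm \<Rightarrow> bool" where
  "agree_near x A a B b \<longleftrightarrow>
     (\<exists>W. open W \<and> x \<in> W \<and> W \<subseteq> A \<and> W \<subseteq> B \<and> cmp a (incl W A) = cmp b (incl W B))"

lemma germ_eq_Collect_agree_near:
  "gm x V A a = {(B, b). open B \<and> x \<in> B \<and> b \<in> Hom B V \<and> agree_near x A a B b}"
  unfolding germ_def agree_near_def by auto

lemma agree_near_refl: "open A \<Longrightarrow> x \<in> A \<Longrightarrow> agree_near x A a A a"
  unfolding agree_near_def by blast

lemma agree_near_sym: "agree_near x A a B b \<Longrightarrow> agree_near x B b A a"
  unfolding agree_near_def by metis

lemma agree_near_trans: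
  assumes ab: "agree_near x A a B b" and bc: "agree_near x B b C c"
    and "open A" "open B" "open C" "open V" "a \<in> Hom A V" "b \<in> Hom B V" "c \<in> Hom C V"
  shows "agree_near x A a C c"
proof -
  obtain W where W: "open W" "x \<in> W" "W \<subseteq> A" "W \<subseteq> B" "cmp a (incl W A) = cmp b (incl W B)"
    using ab unfolding agree_near_def by blast
  obtain W' where W': "open W'" "x \<in> W'" "W' \<subseteq> B" "W' \<subseteq> C" "cmp b (incl W' B) = cmp c (incl W' C)"
    using bc unfolding agree_near_def by blast
  let ?N = "W \<inter> W'"
  have "open ?N" using W W' by auto
  have "cmp a (incl ?N A) = cmp (cmp a (incl W A)) (incl ?N W)"
    using comp_incl_restrict[of ?N W A V a] \<open>open ?N\<close> W W' assms by auto
  also have "\<dots> = cmp b (incl ?N B)"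
    using comp_incl_restrict[of ?N W B V b] \<open>open ?N\<close> W W' assms by auto
  also have "\<dots> = cmp (cmp b (incl W' B)) (incl ?N W')"
    using comp_incl_restrict[of ?N W' B V b] \<open>open ?N\<close> W W' assms by auto
  also have "\<dots> = cmp c (incl ?N C)"
    using comp_incl_restrict[of ?N W' C V c] \<open>open ?N\<close> W W' assms by auto
  finally show ?thesis unfolding agree_near_def using W W' by (intro exI[of _ ?N]) auto
qed

lemma germ_self_mem: "open A \<Longrightarrow> x \<in> A \<Longrightarrow> a \<in> Hom A V \<Longrightarrow> (A, a) \<in> gm x V A a"
  unfolding germ_eq_Collect_agree_near using agree_near_refl by blast

lemma germ_eq_iff_agree_near:
  assumes "open A" "open B" "open V" "x \<in> A" "x \<in> B" "a \<in> Hom A V" "b \<in> Hom B V"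
  shows "gm x V A a = gm x V B b \<longleftrightarrow> agree_near x A a B b"
proof
  assume "gm x V A a = gm x V B b"
  moreover have "(B, b) \<in> gm x V B b" using assms germ_self_mem by blast
  ultimately show "agree_near x A a B b" unfolding germ_eq_Collect_agree_near by auto
next
  assume ab: "agree_near x A a B b"
  have "agree_near x A a C c \<longleftrightarrow> agree_near x B b C c"
    if "open C" "c \<in> Hom C V" for C c
    using agree_near_trans[OF agree_near_sym[OF ab]] agree_near_trans[OF ab] that assms by blast
  then show "gm x V A a = gm x V B b"
    unfolding germ_eq_Collect_agree_near by blast
qed

lemma eventually_agree_near:
  "agree_near x A a B b \<Longrightarrow> eventually (\<lambda>x'. agree_near x' A a B b) (nhds x)"
  unfolding agree_near_def eventually_nhds by blast

lemma germ_restrict: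
  assumes "open W" "open A" "open V" "x \<in> W" "W \<subseteq> A" "a \<in> Hom A V"
  shows "gm x V A a = gm x V W (cmp a (incl W A))"
proof -
  have restr: "cmp a (incl W A) \<in> Hom W V" using assms comp_hom incl_hom by blast
  then have "cmp (cmp a (incl W A)) (incl W W) = cmp a (incl W A)"
    using assms incl_refl comp_ident_right by simp
  then have "agree_near x A a W (cmp a (incl W A))"
    using assms unfolding agree_near_def by (intro exI[of _ W]) auto
  with assms restr show ?thesis by (subst germ_eq_iff_agree_near) auto
qed

lemma germ_postcomp:
  assumes "gm x V A a = gm x V B b" "open A" "open B" "open V" "open V'" "x \<in> A" "x \<in> B"
    "a \<in> Hom A V" "b \<in> Hom B V" "h \<in> Hom V V'"
  shows "gm x V' A (cmp h a) = gm x V' B (cmp h b)"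
proof -
  have "agree_near x A a B b" using assms by (simp add: germ_eq_iff_agree_near)
  then obtain W where W: "open W" "x \<in> W" "W \<subseteq> A" "W \<subseteq> B" "cmp a (incl W A) = cmp b (incl W B)"
    unfolding agree_near_def by blast
  have "cmp (cmp h a) (incl W A) = cmp h (cmp a (incl W A))"
    using comp_assoc[of W A V V' "incl W A" a h] assms W incl_hom by simp
  also have "\<dots> = cmp (cmp h b) (incl W B)"
    using comp_assoc[of W B V V' "incl W B" b h] assms W incl_hom by simp
  finally have "agree_near x A (cmp h a) B (cmp h b)"
    using W unfolding agree_near_def by blast
  then show ?thesis using assms comp_hom by (simp add: germ_eq_iff_agree_near)
qed

abbreviation "CS \<equiv> Cstar Hom cmp incl"
abbreviation "cs_comp \<equiv> Cstar_comp Hom cmp incl"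
abbreviation "cs_id \<equiv> Cstar_id Hom cmp ident incl"

definition represents :: "('a set \<Rightarrow> ('a set \<times> 'm) set) \<Rightarrow> 'a \<Rightarrow> 'a set \<Rightarrow> 'a set \<Rightarrow> 'm \<Rightarrow> bool" where
  "represents \<phi> x V A a \<longleftrightarrow> open V \<and> open A \<and> x \<in> A \<and> a \<in> Hom A V \<and> \<phi> V = gm x V A a"

lemma CstarI:
  assumes comp: "\<And>V. open V \<Longrightarrow> y \<in> V \<Longrightarrow> \<exists>A a. represents \<phi> x V A a"
    and outside: "\<And>V. \<not> (open V \<and> y \<in> V) \<Longrightarrow> \<phi> V = {}"
    and ext: "\<And>V V' A a. open V \<Longrightarrow> y \<in> V' \<Longrightarrow> V' \<subseteq> V \<Longrightarrow> represents \<phi> x V' A a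
           \<Longrightarrow> \<phi> V = gm x V A (cmp (incl V' V) a)"
  shows "\<phi> \<in> CS x y"
  unfolding Cstar_def mem_Collect_eq
proof (intro conjI allI impI)
  fix V assume "open V \<and> y \<in> V"
  then obtain A a where "represents \<phi> x V A a" using comp by blast
  then show "\<phi> V \<in> germs Hom cmp incl x V" unfolding represents_def germs_def by blast
next
  fix V assume "\<not> (open V \<and> y \<in> V)"
  then show "\<phi> V = {}" by (rule outside)
next
  fix V V' A a
  assume "open V \<and> open V' \<and> y \<in> V' \<and> V' \<subseteq> V \<and> open A \<and> x \<in> A \<and> a \<in> Hom A V' \<and> \<phi> V' = gm x V' A a"
  then show "\<phi> V = gm x V A (cmp (incl V' V) a)" by (intro ext) (auto simp: represents_def)
qed

lemma Cstar_germs: "\<phi> \<in> CS x y \<Longrightarrow> open V \<Longrightarrow> y \<in> V \<Longrightarrow> \<phi> V \<in> germs Hom cmp incl x V"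
  unfolding Cstar_def by (drule CollectD, drule conjunct1) blast

lemma Cstar_outside: "\<phi> \<in> CS x y \<Longrightarrow> y \<notin> V \<Longrightarrow> \<phi> V = {}"
  unfolding Cstar_def by (drule CollectD, drule conjunct2, drule conjunct1) blast

lemma Cstar_compatible:
  "\<phi> \<in> CS x y \<Longrightarrow> open V \<Longrightarrow> open V' \<Longrightarrow> y \<in> V' \<Longrightarrow> V' \<subseteq> V \<Longrightarrow> open A \<Longrightarrow> x \<in> A
    \<Longrightarrow> a \<in> Hom A V' \<Longrightarrow> \<phi> V' = gm x V' A a \<Longrightarrow> \<phi> V = gm x V A (cmp (incl V' V) a)"
  unfolding Cstar_def by (drule CollectD, drule conjunct2, drule conjunct2) blast

lemma Cstar_represents:
  assumes "\<phi> \<in> CS x y" "open V" "y \<in> V"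
  obtains A a where "represents \<phi> x V A a"
  using Cstar_germs[OF assms] that assms(2) unfolding germs_def represents_def by blast

lemma Cstar_target:
  assumes "\<phi> \<in> CS x y" "represents \<phi> x V A a"
  shows "y \<in> V"
proof (rule ccontr)
  assume "y \<notin> V"
  then have "\<phi> V = {}" by (rule Cstar_outside[OF assms(1)])
  moreover have "(A, a) \<in> \<phi> V" using assms(2) germ_self_mem unfolding represents_def by auto
  ultimately show False by simp
qed

lemma Cstar_extend:
  assumes "\<phi> \<in> CS x y" "represents \<phi> x V' A a" "open V" "V' \<subseteq> V"
  shows "represents \<phi> x V A (cmp (incl V' V) a)"
proof -
  have r: "open V'" "open A" "x \<in> A" "a \<in> Hom A V'" "\<phi> V' = gm x V' A a"
    using assms(2) unfolding represents_def by auto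
  have "y \<in> V'" using Cstar_target assms by blast
  then have "\<phi> V = gm x V A (cmp (incl V' V) a)"
    using Cstar_compatible assms(1,3,4) r by blast
  moreover have "cmp (incl V' V) a \<in> Hom A V" using comp_hom incl_hom assms(3,4) r by blast
  ultimately show ?thesis using assms(3) r unfolding represents_def by blast
qed

lemma Cstar_id_mem: "cs_id x \<in> CS x x"
proof (rule CstarI)
  fix V assume "open V" "x \<in> V"
  then show "\<exists>A a. represents (cs_id x) x V A a"
    unfolding represents_def Cstar_id_def using ident_hom by auto
next
  fix V assume "\<not> (open V \<and> x \<in> V)"
  then show "cs_id x V = {}" unfolding Cstar_id_def by auto
next
  fix V V' A a assume V: "open V" "x \<in> V'" "V' \<subseteq> V" "represents (cs_id x) x V' A a"
  then have o: "open V'" "open A" "x \<in> A" "a \<in> Hom A V'" "gm x V' V' (ident V') = gm x V' A a"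
    unfolding represents_def Cstar_id_def by auto
  have i: "incl V' V \<in> Hom V' V" using incl_hom V o by blast
  have "cs_id x V = gm x V V' (cmp (ident V) (incl V' V))"
    using germ_restrict[of V' V V x "ident V"] V o ident_hom unfolding Cstar_id_def by auto
  also have "\<dots> = gm x V V' (cmp (incl V' V) (ident V'))"
    using comp_ident_left comp_ident_right i V o by simp
  also have "\<dots> = gm x V A (cmp (incl V' V) a)"
    using germ_postcomp[OF o(5)] ident_hom i V o by simp
  finally show "cs_id x V = gm x V A (cmp (incl V' V) a)" .
qed

lemma composite_germ_unique:
  assumes \<phi>: "\<phi> \<in> CS x y"
    and g: "represents \<psi> y W V g" and a: "represents \<phi> x V A a"
    and g': "represents \<psi> y W V' g'" and a': "represents \<phi> x V' A' a'"
  shows "gm x W A (cmp g a) = gm x W A' (cmp g' a')"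
proof -
  have y: "y \<in> V" "y \<in> V'" using Cstar_target \<phi> a a' by blast+
  have h: "open W" "open V" "open V'" "g \<in> Hom V W" "g' \<in> Hom V' W" "gm y W V g = gm y W V' g'"
    using g g' unfolding represents_def by auto
  then have "agree_near y V g V' g'" using y by (simp add: germ_eq_iff_agree_near)
  then obtain N where N: "open N" "y \<in> N" "N \<subseteq> V" "N \<subseteq> V'" "cmp g (incl N V) = cmp g' (incl N V')"
    unfolding agree_near_def by blast
  obtain A2 a2 where a2: "represents \<phi> x N A2 a2" using Cstar_represents \<phi> N(1,2) by blast
  have o2: "open A2" "x \<in> A2" "a2 \<in> Hom A2 N" using a2 unfolding represents_def by auto
  have "gm x W A (cmp g a) = gm x W A2 (cmp g (cmp (incl N V) a2))"
  proof (rule germ_postcomp)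
    show "gm x V A a = gm x V A2 (cmp (incl N V) a2)"
      using a Cstar_extend[OF \<phi> a2 h(2) N(3)] unfolding represents_def by simp
  qed (use a h o2 N incl_hom comp_hom in \<open>auto simp: represents_def\<close>)
  also have "cmp g (cmp (incl N V) a2) = cmp g' (cmp (incl N V') a2)"
    using comp_assoc[of A2 N V W a2 "incl N V" g] comp_assoc[of A2 N V' W a2 "incl N V'" g']
      N h o2 incl_hom by simp
  also have "gm x W A2 (cmp g' (cmp (incl N V') a2)) = gm x W A' (cmp g' a')"
  proof (rule germ_postcomp)
    show "gm x V' A2 (cmp (incl N V') a2) = gm x V' A' a'"
      using a' Cstar_extend[OF \<phi> a2 h(3) N(4)] unfolding represents_def by simp
  qed (use a' h o2 N incl_hom comp_hom in \<open>auto simp: represents_def\<close>)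
  finally show ?thesis .
qed

lemma Cstar_comp_represents:
  assumes \<phi>: "\<phi> \<in> CS x y" and z: "z \<in> W"
    and g: "represents \<psi> y W V g" and a: "represents \<phi> x V A a"
  shows "represents (cs_comp x y z \<psi> \<phi>) x W A (cmp g a)"
proof -
  have W: "open W" using g unfolding represents_def by blast
  let ?P = "\<lambda>\<gamma>. \<exists>V g A a. open V \<and> y \<in> V \<and> g \<in> Hom V W \<and> \<psi> W = gm y W V g
          \<and> open A \<and> x \<in> A \<and> a \<in> Hom A V \<and> \<phi> V = gm x V A a \<and> \<gamma> = gm x W A (cmp g a)"
  have "open V \<and> y \<in> V \<and> g \<in> Hom V W \<and> \<psi> W = gm y W V g
          \<and> open A \<and> x \<in> A \<and> a \<in> Hom A V \<and> \<phi> V = gm x V A a"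
    using g a Cstar_target[OF \<phi> a] unfolding represents_def by blast
  then have ex: "?P (gm x W A (cmp g a))" by blast
  define \<gamma> where "\<gamma> = (SOME \<gamma>. ?P \<gamma>)"
  have "?P \<gamma>" unfolding \<gamma>_def by (rule someI[of ?P, OF ex])
  then obtain V' g' A' a' where "open V'" "y \<in> V'" "g' \<in> Hom V' W"
    "\<psi> W = gm y W V' g'" "open A'" "x \<in> A'" "a' \<in> Hom A' V'" "\<phi> V' = gm x V' A' a'"
    and \<gamma>_eq: "\<gamma> = gm x W A' (cmp g' a')"
    by blast
  then have "represents \<psi> y W V' g'" "represents \<phi> x V' A' a'"
    using W unfolding represents_def by auto
  then have "\<gamma> = gm x W A (cmp g a)"
    unfolding \<gamma>_eq using composite_germ_unique[OF \<phi> g a] by metis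
  then have "cs_comp x y z \<psi> \<phi> W = gm x W A (cmp g a)"
    unfolding Cstar_comp_def \<gamma>_def using W z by simp
  moreover have "cmp g a \<in> Hom A W"
    using g a comp_hom unfolding represents_def by blast
  ultimately show ?thesis using g a unfolding represents_def by blast
qed

lemma Cstar_comp_mem:
  assumes \<phi>: "\<phi> \<in> CS x y" and \<psi>: "\<psi> \<in> CS y z"
  shows "cs_comp x y z \<psi> \<phi> \<in> CS x z"
proof (rule CstarI)
  fix W assume "open W" "z \<in> W"
  obtain V g where g: "represents \<psi> y W V g" using Cstar_represents \<psi> \<open>open W\<close> \<open>z \<in> W\<close> by blast
  obtain A a where a: "represents \<phi> x V A a"
    using Cstar_represents[OF \<phi>] g unfolding represents_def by blast
  show "\<exists>A a. represents (cs_comp x y z \<psi> \<phi>) x W A a"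
    using Cstar_comp_represents[OF \<phi> \<open>z \<in> W\<close> g a] by blast
next
  fix W assume "\<not> (open W \<and> z \<in> W)"
  then show "cs_comp x y z \<psi> \<phi> W = {}" unfolding Cstar_comp_def by (rule if_not_P)
next
  fix W W' A h assume W: "open W" "z \<in> W'" "W' \<subseteq> W" and h: "represents (cs_comp x y z \<psi> \<phi>) x W' A h"
  have oW': "open W'" using h unfolding represents_def by blast
  obtain V g where g: "represents \<psi> y W' V g" using Cstar_represents \<psi> oW' W(2) by blast
  obtain A1 a where a: "represents \<phi> x V A1 a"
    using Cstar_represents[OF \<phi>] g unfolding represents_def by blast
  have gW: "represents \<psi> y W V (cmp (incl W' W) g)" by (rule Cstar_extend[OF \<psi> g W(1,3)])
  have o: "open V" "open A1" "x \<in> A1" "a \<in> Hom A1 V" "g \<in> Hom V W'" "incl W' W \<in> Hom W' W"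
    using a g W oW' incl_hom unfolding represents_def by auto
  have "cs_comp x y z \<psi> \<phi> W = gm x W A1 (cmp (cmp (incl W' W) g) a)"
    using Cstar_comp_represents[OF \<phi> _ gW a] W unfolding represents_def by blast
  also have "\<dots> = gm x W A1 (cmp (incl W' W) (cmp g a))"
    using comp_assoc[of A1 V W' W a g "incl W' W"] o oW' W by simp
  also have "\<dots> = gm x W A (cmp (incl W' W) h)"
  proof (rule germ_postcomp)
    show "gm x W' A1 (cmp g a) = gm x W' A h"
      using Cstar_comp_represents[OF \<phi> W(2) g a] h unfolding represents_def by simp
  qed (use o oW' W h comp_hom in \<open>auto simp: represents_def\<close>)
  finally show "cs_comp x y z \<psi> \<phi> W = gm x W A (cmp (incl W' W) h)" .
qed

end

locale pre_pseudogroup_on = opens_category Hom cmp ident incl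
  for Hom :: "'a::topological_space set \<Rightarrow> 'a set \<Rightarrow> 'm set" and cmp ident incl +
  assumes germs_bij:
      "open V \<Longrightarrow> bij_betw (\<lambda>(y, \<phi>). \<phi> V) (SIGMA y:V. Cstar Hom cmp incl x y) (germs Hom cmp incl x V)"
    and Cstar_invertible: "\<phi> \<in> Cstar Hom cmp incl x y \<Longrightarrow> \<exists>\<psi> \<in> Cstar Hom cmp incl y x.
        Cstar_comp Hom cmp incl x y x \<psi> \<phi> = Cstar_id Hom cmp ident incl x
      \<and> Cstar_comp Hom cmp incl y x y \<phi> \<psi> = Cstar_id Hom cmp ident incl y"
begin

abbreviation "ul \<equiv> underlying Hom cmp incl"

lemma underlying_eqI:
  assumes \<phi>: "\<phi> \<in> CS x y" and a: "represents \<phi> x V A a"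
  shows "ul A V a x = y"
  unfolding underlying_def
proof (rule the_equality)
  have "y \<in> V" using Cstar_target \<phi> a by blast
  then show "y \<in> V \<and> (\<exists>\<phi>\<in>CS x y. \<phi> V = gm x V A a)"
    using \<phi> a unfolding represents_def by blast
next
  fix y' assume "y' \<in> V \<and> (\<exists>\<phi>'\<in>CS x y'. \<phi>' V = gm x V A a)"
  then obtain \<phi>' where "y' \<in> V" "\<phi>' \<in> CS x y'" "\<phi>' V = \<phi> V"
    using a unfolding represents_def by auto
  moreover have "y \<in> V" using Cstar_target \<phi> a by blast
  moreover have "open V" using a unfolding represents_def by blast
  ultimately have "(y', \<phi>') = (y, \<phi>)"
    using inj_onD[OF bij_betw_imp_inj_on[OF germs_bij[of V x]], of "(y', \<phi>')" "(y, \<phi>)"] \<phi> by auto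
  then show "y' = y" by simp
qed

lemma underlying_represents:
  assumes "open A" "open V" "x \<in> A" "a \<in> Hom A V"
  obtains \<phi> where "\<phi> \<in> CS x (ul A V a x)" "represents \<phi> x V A a"
proof -
  have "gm x V A a \<in> germs Hom cmp incl x V" unfolding germs_def using assms by blast
  then have "gm x V A a \<in> (\<lambda>(y, \<phi>). \<phi> V) ` (SIGMA y:V. CS x y)"
    using bij_betw_imp_surj_on[OF germs_bij[OF assms(2)]] by simp
  then obtain y \<phi> where \<phi>: "\<phi> \<in> CS x y" "\<phi> V = gm x V A a" by auto
  then have r: "represents \<phi> x V A a" using assms unfolding represents_def by blast
  have "ul A V a x = y" by (rule underlying_eqI[OF \<phi>(1) r])
  then show ?thesis using that \<phi>(1) r by blast
qed

lemma underlying_in: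
  assumes "open A" "open V" "x \<in> A" "a \<in> Hom A V"
  shows "ul A V a x \<in> V"
proof -
  obtain \<phi> where "\<phi> \<in> CS x (ul A V a x)" "represents \<phi> x V A a"
    using underlying_represents[OF assms] .
  then show ?thesis by (rule Cstar_target)
qed

lemma underlying_ident: "open A \<Longrightarrow> x \<in> A \<Longrightarrow> ul A A (ident A) x = x"
  using underlying_eqI[OF Cstar_id_mem] ident_hom unfolding represents_def Cstar_id_def by simp

lemma underlying_comp:
  assumes "open A" "open B" "open C" "x \<in> A" "a \<in> Hom A B" "b \<in> Hom B C"
  shows "ul A C (cmp b a) x = ul B C b (ul A B a x)"
proof -
  let ?y = "ul A B a x"
  obtain \<phi> where \<phi>: "\<phi> \<in> CS x ?y" "represents \<phi> x B A a"
    using underlying_represents[OF assms(1,2,4,5)] .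
  have y: "?y \<in> B" using underlying_in[OF assms(1,2,4,5)] .
  obtain \<psi> where \<psi>: "\<psi> \<in> CS ?y (ul B C b ?y)" "represents \<psi> ?y C B b"
    using underlying_represents[OF assms(2,3) y assms(6)] .
  have z: "ul B C b ?y \<in> C" using underlying_in[OF assms(2,3) y assms(6)] .
  show ?thesis
    by (rule underlying_eqI[OF Cstar_comp_mem[OF \<phi>(1) \<psi>(1)] Cstar_comp_represents[OF \<phi>(1) z \<psi>(2) \<phi>(2)]])
qed

lemma underlying_postcomp_incl:
  assumes "open V" "open V'" "V \<subseteq> V'" "open A" "x \<in> A" "a \<in> Hom A V"
  shows "ul A V' (cmp (incl V V') a) x = ul A V a x"
proof -
  obtain \<phi> where \<phi>: "\<phi> \<in> CS x (ul A V a x)" "represents \<phi> x V A a"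
    using underlying_represents[OF assms(4,1,5,6)] .
  show ?thesis by (rule underlying_eqI[OF \<phi>(1) Cstar_extend[OF \<phi> assms(2,3)]])
qed

lemma eventually_underlying_eq_of_germ_eq:
  assumes "gm x V A a = gm x V B b" "open A" "open B" "open V" "x \<in> A" "x \<in> B"
    "a \<in> Hom A V" "b \<in> Hom B V"
  shows "eventually (\<lambda>x'. ul A V a x' = ul B V b x') (nhds x)"
proof -
  have "agree_near x A a B b" using assms by (simp add: germ_eq_iff_agree_near)
  then have "eventually (\<lambda>x'. agree_near x' A a B b \<and> x' \<in> A \<and> x' \<in> B) (nhds x)"
    using eventually_agree_near eventually_nhds_in_open[OF \<open>open A\<close> \<open>x \<in> A\<close>]
      eventually_nhds_in_open[OF \<open>open B\<close> \<open>x \<in> B\<close>] by (simp add: eventually_conj_iff)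
  then show ?thesis
  proof (rule eventually_mono)
    fix x' assume "agree_near x' A a B b \<and> x' \<in> A \<and> x' \<in> B"
    then have "gm x' V A a = gm x' V B b" using assms by (simp add: germ_eq_iff_agree_near)
    then show "ul A V a x' = ul B V b x'" unfolding underlying_def by simp
  qed
qed

lemma eventually_underlying_eq_restrict:
  assumes \<phi>: "\<phi> \<in> CS x y" and a: "represents \<phi> x V A a" and b: "represents \<phi> x W B b"
    and "W \<subseteq> V"
  shows "eventually (\<lambda>x'. ul A V a x' = ul B W b x') (nhds x)"
proof -
  have o: "open V" "open W" "open B" "x \<in> B" "b \<in> Hom B W"
    using a b unfolding represents_def by auto
  have "represents \<phi> x V B (cmp (incl W V) b)" by (rule Cstar_extend[OF \<phi> b o(1) \<open>W \<subseteq> V\<close>])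
  then have "eventually (\<lambda>x'. ul A V a x' = ul B V (cmp (incl W V) b) x') (nhds x)"
    using a by (intro eventually_underlying_eq_of_germ_eq) (auto simp: represents_def)
  moreover have "eventually (\<lambda>x'. x' \<in> B) (nhds x)" using eventually_nhds_in_open o by blast
  ultimately show ?thesis
    by eventually_elim (use o \<open>W \<subseteq> V\<close> in \<open>simp add: underlying_postcomp_incl\<close>)
qed

lemma eventually_underlying_eq:
  assumes \<phi>: "\<phi> \<in> CS x y" and a: "represents \<phi> x B A a" and a': "represents \<phi> x B' A' a'"
  shows "eventually (\<lambda>x'. ul A B a x' = ul A' B' a' x') (nhds x)"
proof -
  have "open (B \<inter> B')" "y \<in> B \<inter> B'" using Cstar_target \<phi> a a' unfolding represents_def by auto
  then obtain A3 a3 where a3: "represents \<phi> x (B \<inter> B') A3 a3"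
    by (rule Cstar_represents[OF \<phi>])
  have "eventually (\<lambda>x'. ul A B a x' = ul A3 (B \<inter> B') a3 x') (nhds x)"
    by (rule eventually_underlying_eq_restrict[OF \<phi> a a3]) blast
  moreover have "eventually (\<lambda>x'. ul A' B' a' x' = ul A3 (B \<inter> B') a3 x') (nhds x)"
    by (rule eventually_underlying_eq_restrict[OF \<phi> a' a3]) blast
  ultimately show ?thesis by eventually_elim simp
qed

lemma tendsto_underlying:
  assumes "open A" "open B" "a \<in> Hom A B" "x \<in> A"
  shows "(ul A B a \<longlongrightarrow> ul A B a x) (nhds x)"
  unfolding tendsto_def
proof (intro allI impI)
  fix S assume S: "open S" "ul A B a x \<in> S"
  obtain \<phi> where \<phi>: "\<phi> \<in> CS x (ul A B a x)" "represents \<phi> x B A a"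
    using underlying_represents[OF assms(1,2,4,3)] .
  have "ul A B a x \<in> S \<inter> B" using S(2) underlying_in[OF assms(1,2,4,3)] by blast
  then obtain A1 a1 where a1: "represents \<phi> x (S \<inter> B) A1 a1"
    using Cstar_represents[OF \<phi>(1) open_Int[OF S(1) assms(2)]] by blast
  have o1: "open (S \<inter> B)" "open A1" "x \<in> A1" "a1 \<in> Hom A1 (S \<inter> B)"
    using a1 unfolding represents_def by auto
  have "eventually (\<lambda>x'. ul A B a x' = ul A1 (S \<inter> B) a1 x') (nhds x)"
    by (rule eventually_underlying_eq[OF \<phi> a1])
  moreover have "eventually (\<lambda>x'. x' \<in> A1) (nhds x)" using eventually_nhds_in_open o1 by blast
  ultimately show "eventually (\<lambda>x'. ul A B a x' \<in> S) (nhds x)"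
    by eventually_elim (metis IntD1 underlying_in[OF o1(2,1) _ o1(4)])
qed

lemma continuous_on_underlying:
  assumes "open A" "open B" "a \<in> Hom A B"
  shows "continuous_on A (ul A B a)"
  unfolding continuous_on_def
proof
  fix x assume "x \<in> A"
  show "(ul A B a \<longlongrightarrow> ul A B a x) (at x within A)"
    by (rule tendsto_mono[OF _ tendsto_underlying[OF assms \<open>x \<in> A\<close>]]) (simp add: at_within_def)
qed

lemma eventually_underlying_left_inverse:
  assumes \<phi>: "\<phi> \<in> CS x y" and \<psi>: "\<psi> \<in> CS y x" and inv: "cs_comp x y x \<psi> \<phi> = cs_id x"
    and a: "represents \<phi> x B A a" and b: "represents \<psi> y A' B' b"
  shows "eventually (\<lambda>x'. ul A B a x' \<in> B' \<and> ul B' A' b (ul A B a x') = x') (nhds x)"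
proof -
  have xA': "x \<in> A'" by (rule Cstar_target[OF \<psi> b])
  have o: "open A" "open B" "x \<in> A" "a \<in> Hom A B" "open A'" "open B'" "y \<in> B'"
    using a b unfolding represents_def by auto
  obtain V g where g: "represents \<psi> y A' V g" by (rule Cstar_represents[OF \<psi> o(5) xA'])
  have oV: "open V" "y \<in> V" "g \<in> Hom V A'" using g unfolding represents_def by auto
  obtain U f where f: "represents \<phi> x V U f" by (rule Cstar_represents[OF \<phi> oV(1,2)])
  have oU: "open U" "x \<in> U" "f \<in> Hom U V" using f unfolding represents_def by auto
  have gf: "cmp g f \<in> Hom U A'" by (rule comp_hom[OF oU(1) oV(1) o(5) oU(3) oV(3)])
  have "represents (cs_id x) x A' U (cmp g f)"
    using Cstar_comp_represents[OF \<phi> xA' g f] inv by simp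
  then have "gm x A' U (cmp g f) = gm x A' A' (ident A')"
    using o(5) xA' unfolding represents_def Cstar_id_def by simp
  then have "eventually (\<lambda>x'. ul U A' (cmp g f) x' = ul A' A' (ident A') x') (nhds x)"
    by (rule eventually_underlying_eq_of_germ_eq[OF _ oU(1) o(5) o(5) oU(2) xA' gf ident_hom[OF o(5)]])
  moreover have "eventually (\<lambda>x'. x' \<in> U \<and> x' \<in> A') (nhds x)"
    using eventually_nhds_in_open[OF oU(1,2)] eventually_nhds_in_open[OF o(5) xA']
    by (simp add: eventually_conj_iff)
  moreover have "eventually (\<lambda>x'. ul A B a x' = ul U V f x') (nhds x)"
    by (rule eventually_underlying_eq[OF \<phi> a f])
  moreover have "eventually (\<lambda>y'. ul B' A' b y' = ul V A' g y' \<and> y' \<in> B') (nhds y)"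
    using eventually_underlying_eq[OF \<psi> b g] eventually_nhds_in_open[OF o(6,7)]
    by (simp add: eventually_conj_iff)
  then have "eventually (\<lambda>x'. ul B' A' b (ul A B a x') = ul V A' g (ul A B a x')
      \<and> ul A B a x' \<in> B') (nhds x)"
    by (rule eventually_compose_filterlim)
      (use tendsto_underlying[OF o(1,2,4,3)] underlying_eqI[OF \<phi> a] in simp)
  ultimately show ?thesis
    by eventually_elim
      (simp add: underlying_comp[OF oU(1) oV(1) o(5) _ oU(3) oV(3)] underlying_ident[OF o(5)])
qed

lemma local_homeomorphism_on_underlying:
  assumes "open U" "open V" "f \<in> Hom U V"
  shows "local_homeomorphism_on U (ul U V f)"
  unfolding local_homeomorphism_on_def
proof
  let ?f = "ul U V f"
  fix x assume x: "x \<in> U"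
  obtain \<phi> where \<phi>: "\<phi> \<in> CS x (?f x)" "represents \<phi> x V U f"
    by (rule underlying_represents[OF assms(1,2) x assms(3)])
  obtain \<psi> where \<psi>: "\<psi> \<in> CS (?f x) x" "cs_comp x (?f x) x \<psi> \<phi> = cs_id x"
    "cs_comp (?f x) x (?f x) \<phi> \<psi> = cs_id (?f x)"
    using Cstar_invertible[OF \<phi>(1)] by blast
  obtain B b where b: "represents \<psi> (?f x) U B b" by (rule Cstar_represents[OF \<psi>(1) assms(1) x])
  have "\<exists>W. open W \<and> x \<in> W \<and> W \<subseteq> U \<and> open (?f ` W) \<and> homeomorphism W (?f ` W) ?f (ul B U b)"
  proof (rule local_homeomorphism_from_local_inverse[OF assms(1) _ x])
    show "open B" "continuous_on B (ul B U b)"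
      using b continuous_on_underlying assms(1) unfolding represents_def by auto
    show "continuous_on U ?f" by (rule continuous_on_underlying[OF assms])
    show "eventually (\<lambda>x'. ?f x' \<in> B \<and> ul B U b (?f x') = x') (nhds x)"
      by (rule eventually_underlying_left_inverse[OF \<phi>(1) \<psi>(1,2) \<phi>(2) b])
    show "eventually (\<lambda>y'. ul B U b y' \<in> U \<and> ?f (ul B U b y') = y') (nhds (?f x))"
      by (rule eventually_underlying_left_inverse[OF \<psi>(1) \<phi>(1) \<psi>(3) b \<phi>(2)])
  qed
  then show "\<exists>W. open W \<and> x \<in> W \<and> W \<subseteq> U \<and> open (?f ` W) \<and> (\<exists>h. homeomorphism W (?f ` W) ?f h)"
    by blast
qed

end

lemma pre_pseudogroup_on_if_pre_pseudogroup:
  "pre_pseudogroup Hom cmp ident incl \<Longrightarrow> pre_pseudogroup_on Hom cmp ident incl"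
  unfolding pre_pseudogroup_def pre_pseudogroup_on_def pre_pseudogroup_on_axioms_def opens_category_def
  by blast

theorem mainTheorem3:
  fixes Hom :: "'a::t1_space set \<Rightarrow> 'a set \<Rightarrow> 'm set"
    and cmp :: "'m \<Rightarrow> 'm \<Rightarrow> 'm"
    and ident :: "'a set \<Rightarrow> 'm"
    and incl :: "'a set \<Rightarrow> 'a set \<Rightarrow> 'm"
  assumes "pre_pseudogroup Hom cmp ident incl"
    and "open U" and "open V" and "f \<in> Hom U V"
  shows "underlying Hom cmp incl U V f ` U \<subseteq> V
    \<and> continuous_on U (underlying Hom cmp incl U V f)
    \<and> local_homeomorphism_on U (underlying Hom cmp incl U V f)"
proof -
  interpret pre_pseudogroup_on Hom cmp ident incl
    by (rule pre_pseudogroup_on_if_pre_pseudogroup[OF assms(1)])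
  show ?thesis
    using underlying_in[OF assms(2,3) _ assms(4)] continuous_on_underlying[OF assms(2-4)]
      local_homeomorphism_on_underlying[OF assms(2-4)]
    by blast
qed

end
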